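(* For $\beta,c,\beta',c'\in\mathbb{C}$, the formal deformations $(\langle\cdot,\cdot\rangle^{\beta,c}_n)_{n\ge0}$ and $(\langle\cdot,\cdot\rangle^{\beta',c'}_n)_{n\ge0}$ of $\mathcal K$ are modular-isomorphic if and only if $c=c'$ and either $\beta=\beta'=0$ or both $\beta\ne0$ and $\beta'\ne0$.
   Context: Let $\mathcal K=\mathbb{C}[E_4,E_6,A,A^{-1},B]$ be the localization at $A$ of the polynomial algebra $\mathbb{C}[E_4,E_6,A,B]$ in algebraically independent variables, bigraded by weight and index with $E_4$: $(4,0)$, $E_6$: $(6,0)$, $A$: $(-2,1)$, $B$: $(0,1)$; $\mathcal K_{k,p}$ are the homogeneous components. Set $F_2=BA^{-1}$. Let $\pi$ be the derivation with $\pi(f)=kF_2f$ for $f\in\mathcal K_{k,p}$, $S^\flat$ the derivation with $S^\flat(E_4)=-\frac13E_6$, $S^\flat(E_6)=-\frac12E_4^2$, $S^\flat(F_2)=0$, $S^\flat(A)=0$, and $\delta_\beta=S^\flat+\beta\pi$. For $f\in\mathcal K_{k,p}$, $g\in\mathcal K_{\ell,q}$: $\langle f,g\rangle^{\beta,c}_n=\sum_{i=0}^n(-1)^i\binom{k+cp+n-1}{n-i}\binom{\ell+cq+n-1}{i}\delta_\beta^i(f)\delta_\beta^{n-i}(g)$, extended bilinearly; these are formal deformations of $\mathcal K$. Two formal deformations $(\mu_n)_n$, $(\nu_n)_n$ of $\mathcal K$ are modular-isomorphic if there is a $\mathbb{C}$-linear bijection $\phi:\mathcal K\to\mathcal K$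 mapping each $\mathcal K_{k,p}$ into $\mathcal K_{k,p}$ with $\phi(\mu_n(f,g))=\nu_n(\phi(f),\phi(g))$ for all $n\ge0$, $f,g\in\mathcal K$. *)

theory Defs
  imports Complex_Main "HOL-Library.Poly_Mapping" "HOL-Library.Product_Plus"
begin

text \<open>The algebra K = C[E4,E6,A,A^-1,B] is modelled as finitely supported functions
from exponent vectors (a,b,c,d) (for E4^a E6^b A^c B^d, with c an integer) to complex
coefficients; multiplication is convolution (Poly_Mapping).\<close>

type_synonym mon = "nat \<times> nat \<times> int \<times> nat"
type_synonym K = "mon \<Rightarrow>\<^sub>0 complex"

definition cK :: "complex \<Rightarrow> K" where "cK z = Poly_Mapping.single 0 z"

definition X :: "mon \<Rightarrow> K" where "X m = Poly_Mapping.single m 1"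

fun wt :: "mon \<Rightarrow> int" where "wt (a,b,c,d) = 4 * int a + 6 * int b - 2 * c"
fun idx :: "mon \<Rightarrow> int" where "idx (a,b,c,d) = c + int d"

definition Kcomp :: "int \<Rightarrow> int \<Rightarrow> K set" where
  "Kcomp k p = {f. \<forall>m\<in>Poly_Mapping.keys f. wt m = k \<and> idx m = p}"

text \<open>F2 = B A^-1\<close>
definition F2 :: K where "F2 = X (0, 0, -1, 1)"

definition linext :: "(mon \<Rightarrow> K) \<Rightarrow> K \<Rightarrow> K" where
  "linext D f = (\<Sum>m\<in>Poly_Mapping.keys f. cK (Poly_Mapping.lookup f m) * D m)"

definition pi_mon :: "mon \<Rightarrow> K" where
  "pi_mon m = cK (of_int (wt m)) * F2 * X m"

text \<open>S-flat on monomials (derivation with S(E4) = -E6/3, S(E6) = -E4^2/2, S(A) = 0, S(F2) = 0,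
hence S(B) = 0).\<close>
fun S_mon :: "mon \<Rightarrow> K" where
  "S_mon (a,b,c,d) =
     cK (of_nat a * (-1/3)) * X (a - 1, b + 1, c, d)
   + cK (of_nat b * (-1/2)) * X (a + 2, b - 1, c, d)"

definition delta :: "complex \<Rightarrow> K \<Rightarrow> K" where
  "delta \<beta> = linext (\<lambda>m. S_mon m + cK \<beta> * pi_mon m)"

text \<open>The bracket on a pair of monomials (which are homogeneous).\<close>
definition bracket_mon :: "complex \<Rightarrow> complex \<Rightarrow> nat \<Rightarrow> mon \<Rightarrow> mon \<Rightarrow> K" where
  "bracket_mon \<beta> c n m1 m2 =
     (\<Sum>i\<le>n. cK ((-1) ^ i
        * ((of_int (wt m1) + c * of_int (idx m1) + of_nat n - 1) gchoose (n - i))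
        * ((of_int (wt m2) + c * of_int (idx m2) + of_nat n - 1) gchoose i))
      * (delta \<beta> ^^ i) (X m1) * (delta \<beta> ^^ (n - i)) (X m2))"

definition bracket :: "complex \<Rightarrow> complex \<Rightarrow> nat \<Rightarrow> K \<Rightarrow> K \<Rightarrow> K" where
  "bracket \<beta> c n f g =
     (\<Sum>m1\<in>Poly_Mapping.keys f. \<Sum>m2\<in>Poly_Mapping.keys g. cK (Poly_Mapping.lookup f m1 * Poly_Mapping.lookup g m2) * bracket_mon \<beta> c n m1 m2)"

definition modular_isomorphic :: "(nat \<Rightarrow> K \<Rightarrow> K \<Rightarrow> K) \<Rightarrow> (nat \<Rightarrow> K \<Rightarrow> K \<Rightarrow> K) \<Rightarrow> bool" where
  "modular_isomorphic \<mu> \<nu> \<longleftrightarrow>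
     (\<exists>\<phi> :: K \<Rightarrow> K.
        bij \<phi>
      \<and> (\<forall>f g. \<phi> (f + g) = \<phi> f + \<phi> g)
      \<and> (\<forall>z f. \<phi> (cK z * f) = cK z * \<phi> f)
      \<and> (\<forall>k p. \<forall>f\<in>Kcomp k p. \<phi> f \<in> Kcomp k p)
      \<and> (\<forall>n f g. \<phi> (\<mu> n f g) = \<nu> n (\<phi> f) (\<phi> g)))"

end

theory Submission
  imports Defs
begin

text \<open>If \<open>c = c'\<close> and \<open>\<beta>, \<beta>'\<close> are both nonzero, the algebra automorphism of \<open>K\<close> fixing
  \<open>E4\<close>, \<open>E6\<close>, \<open>A\<close> and sending \<open>B\<close> to \<open>(\<beta>'/\<beta>) B\<close> preserves the bigrading and conjugates
  \<open>\<delta>\<^sub>\<beta>\<close> into \<open>\<delta>\<^sub>\<beta>\<^sub>'\<close>, so it is a modular isomorphism; if both vanish the deformations coincide.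

  Conversely, a modular isomorphism \<open>\<phi>\<close> is multiplicative, since the 0-th bracket is the
  product, and preserves the low-dimensional components: \<open>\<phi>(A)\<close>, \<open>\<phi>(B)\<close> are nonzero multiples
  of \<open>A\<close>, \<open>B\<close>, \<open>\<phi>(E4) = \<alpha> E4 + \<gamma> F2\<^sup>2\<close> with \<open>\<alpha> \<noteq> 0\<close>, and \<open>\<phi>(E6) = x E6 + y E4 F2 + z F2\<^sup>3\<close>.
  Comparing coefficients in \<open>\<phi>\<langle>E4, E6\<rangle>\<^sub>1 = \<langle>\<phi> E4, \<phi> E6\<rangle>\<^sub>1\<close>, where \<open>\<langle>E4, E6\<rangle>\<^sub>1 = 2 E6\<^sup>2 - 2 E4\<^sup>3\<close>,
  gives \<open>x = \<alpha>\<close>; then \<open>\<langle>A, E4\<rangle>\<^sub>1 = (2 - c)/3 A E6 + 4 \<beta> c B E4\<close> forces \<open>c = c'\<close>, and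
  \<open>\<langle>A, A\<rangle>\<^sub>2 = -4 (c - 1)\<^sup>2 \<beta>\<^sup>2 B\<^sup>2\<close> (or \<open>\<langle>A, B\<rangle>\<^sub>1 = 2 \<beta> c B\<^sup>2\<close> when \<open>c = 1\<close>) shows that
  \<open>\<beta>\<close> vanishes iff \<open>\<beta>'\<close> does.\<close>

lemma cK_0 [simp]: "cK 0 = 0"
  by (simp add: cK_def)

lemma cK_1 [simp]: "cK 1 = 1"
  by (simp add: cK_def)

lemma cK_add: "cK (a + b) = cK a + cK b"
  by (simp add: cK_def single_add)

lemma cK_mult: "cK (a * b) = cK a * cK b"
  by (simp add: cK_def mult_single)

lemma cK_uminus: "cK (- a) = - cK a"
  by (simp add: cK_def single_uminus)

lemma cK_mult_single: "cK z * Poly_Mapping.single m w = Poly_Mapping.single m (z * w)"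
  by (simp add: cK_def mult_single)

lemma cK_mult_X: "cK z * X m = Poly_Mapping.single m z"
  by (simp add: X_def cK_mult_single)

lemma lookup_cK_mult: "Poly_Mapping.lookup (cK z * f) m = z * Poly_Mapping.lookup f m"
  by (simp add: cK_def flip: mult_map_scale_conv_mult) (simp add: Poly_Mapping.map.rep_eq when_def)

lemma keys_cK_mult: "z \<noteq> 0 \<Longrightarrow> Poly_Mapping.keys (cK z * f) = Poly_Mapping.keys f"
  by (auto simp: in_keys_iff lookup_cK_mult)

lemma keys_X [simp]: "Poly_Mapping.keys (X m) = {m}"
  by (simp add: X_def)

lemma lookup_X: "Poly_Mapping.lookup (X m) m' = (if m = m' then 1 else 0)"
  by (simp add: X_def lookup_single when_def)

lemma poly_mapping_eq_sum_single:
  assumes "finite S" "Poly_Mapping.keys f \<subseteq> S"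
  shows "f = (\<Sum>m\<in>S. Poly_Mapping.single m (Poly_Mapping.lookup f m))"
  by (rule poly_mapping_eqI)
    (use assms in \<open>auto simp: lookup_sum lookup_single when_def in_keys_iff
       intro: sum.neutral elim!: sum.remove[THEN trans]\<close>)

lemma mult_eq_sum_single:
  "f * g = (\<Sum>m1\<in>Poly_Mapping.keys f. \<Sum>m2\<in>Poly_Mapping.keys g.
              Poly_Mapping.single (m1 + m2) (Poly_Mapping.lookup f m1 * Poly_Mapping.lookup g m2))"
proof -
  have "f * g = (\<Sum>m1\<in>Poly_Mapping.keys f. Poly_Mapping.single m1 (Poly_Mapping.lookup f m1))
              * (\<Sum>m2\<in>Poly_Mapping.keys g. Poly_Mapping.single m2 (Poly_Mapping.lookup g m2))"
    using poly_mapping_eq_sum_single[OF finite_keys order_refl] by metis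
  then show ?thesis
    by (simp add: sum_distrib_left sum_distrib_right mult_single sum.swap[of _ "Poly_Mapping.keys g"])
qed

lemma delta_eq_sum:
  "delta \<beta> f = (\<Sum>m\<in>Poly_Mapping.keys f. cK (Poly_Mapping.lookup f m) * delta \<beta> (X m))"
  by (simp add: delta_def linext_def lookup_X)

lemma delta_cK_mult: "delta \<beta> (cK z * f) = cK z * delta \<beta> f"
proof (cases "z = 0")
  case True
  then show ?thesis
    by (simp add: delta_def linext_def)
next
  case False
  then show ?thesis
    unfolding delta_eq_sum[of _ "cK z * f"] delta_eq_sum[of _ f] keys_cK_mult[OF False]
    by (simp add: lookup_cK_mult cK_mult sum_distrib_left mult.assoc)
qed

lemma delta_iterate_cK_mult: "(delta \<beta> ^^ i) (cK z * f) = cK z * (delta \<beta> ^^ i) f"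
  by (induction i) (simp_all add: delta_cK_mult)

lemma delta_X:
  "delta \<beta> (X (a, b, c, d)) =
     Poly_Mapping.single (a - 1, b + 1, c, d) (- of_nat a / 3)
   + Poly_Mapping.single (a + 2, b - 1, c, d) (- of_nat b / 2)
   + Poly_Mapping.single (a, b, c - 1, d + 1) (\<beta> * of_int (wt (a, b, c, d)))"
proof -
  have "pi_mon (a, b, c, d) = Poly_Mapping.single (a, b, c - 1, d + 1) (of_int (wt (a, b, c, d)))"
    unfolding pi_mon_def F2_def X_def cK_def by (simp only: mult_single) simp
  then show ?thesis
    by (simp add: delta_def linext_def X_def cK_def mult_single)
qed

lemma bracket_eq_sum_keys_subset:
  assumes "finite S" "Poly_Mapping.keys f \<subseteq> S" "finite T" "Poly_Mapping.keys g \<subseteq> T"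
  shows "bracket \<beta> c n f g = (\<Sum>m1\<in>S. \<Sum>m2\<in>T.
           cK (Poly_Mapping.lookup f m1 * Poly_Mapping.lookup g m2) * bracket_mon \<beta> c n m1 m2)"
  unfolding bracket_def using assms
  by (intro sum.mono_neutral_cong_left sum.mono_neutral_left)
    (auto simp: in_keys_iff intro!: sum.neutral)

lemma bracket_add_left: "bracket \<beta> c n (f + g) h = bracket \<beta> c n f h + bracket \<beta> c n g h"
proof -
  let ?S = "Poly_Mapping.keys f \<union> Poly_Mapping.keys g"
  have "Poly_Mapping.keys (f + g) \<subseteq> ?S"
    by (rule keys_add)
  then show ?thesis
    by (simp add: bracket_eq_sum_keys_subset[of ?S _ "Poly_Mapping.keys h"] lookup_add
        distrib_left distrib_right cK_add sum.distrib)
qed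

lemma bracket_add_right: "bracket \<beta> c n f (g + h) = bracket \<beta> c n f g + bracket \<beta> c n f h"
proof -
  let ?T = "Poly_Mapping.keys g \<union> Poly_Mapping.keys h"
  have "Poly_Mapping.keys (g + h) \<subseteq> ?T"
    by (rule keys_add)
  then show ?thesis
    by (simp add: bracket_eq_sum_keys_subset[of "Poly_Mapping.keys f" _ ?T] lookup_add
        distrib_left distrib_right cK_add sum.distrib)
qed

lemma bracket_single:
  "bracket \<beta> c n (Poly_Mapping.single m1 a) (Poly_Mapping.single m2 b) = cK (a * b) * bracket_mon \<beta> c n m1 m2"
  by (simp add: bracket_eq_sum_keys_subset[of "{m1}" _ "{m2}"])

lemma bracket_X: "bracket \<beta> c n (X m1) (X m2) = bracket_mon \<beta> c n m1 m2"
  using bracket_single[of \<beta> c n m1 1 m2 1] by (simp add: X_def)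

lemma bracket_mon_0: "bracket_mon \<beta> c 0 m1 m2 = X (m1 + m2)"
  by (simp add: bracket_mon_def X_def mult_single)

lemma bracket_0: "bracket \<beta> c 0 f g = f * g"
  unfolding bracket_def bracket_mon_0 cK_mult_X by (rule mult_eq_sum_single[symmetric])

lemma bracket_mon_1:
  "bracket_mon \<beta> c 1 m1 m2 =
     cK (of_int (wt m1) + c * of_int (idx m1)) * (X m1 * delta \<beta> (X m2))
   - cK (of_int (wt m2) + c * of_int (idx m2)) * (delta \<beta> (X m1) * X m2)"
  by (simp add: bracket_mon_def cK_mult cK_uminus algebra_simps)

section \<open>Rescaling B\<close>

fun B_degree :: "mon \<Rightarrow> nat" where
  "B_degree (a, b, c, d) = d"

lemma B_degree_add: "B_degree (m1 + m2) = B_degree m1 + B_degree m2"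
  by (cases m1; cases m2) simp

text \<open>The algebra automorphism fixing \<open>E4\<close>, \<open>E6\<close>, \<open>A\<close> and sending \<open>B\<close> to \<open>t B\<close>; it sends \<open>F2\<close>
  to \<open>t F2\<close>, hence \<open>\<pi>\<close> to \<open>t \<pi>\<close>.\<close>
definition scale_B :: "complex \<Rightarrow> K \<Rightarrow> K" where
  "scale_B t f = Poly_Mapping.mapp (\<lambda>m v. t ^ B_degree m * v) f"

lemma lookup_scale_B: "Poly_Mapping.lookup (scale_B t f) m = t ^ B_degree m * Poly_Mapping.lookup f m"
  by (simp add: scale_B_def lookup_mapp when_def in_keys_iff)

lemma keys_scale_B_subset: "Poly_Mapping.keys (scale_B t f) \<subseteq> Poly_Mapping.keys f"
  by (simp add: scale_B_def keys_mapp_subset)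

lemma keys_scale_B: "t \<noteq> 0 \<Longrightarrow> Poly_Mapping.keys (scale_B t f) = Poly_Mapping.keys f"
  by (auto simp: in_keys_iff lookup_scale_B)

lemma scale_B_add: "scale_B t (f + g) = scale_B t f + scale_B t g"
  by (rule poly_mapping_eqI) (simp add: lookup_scale_B lookup_add algebra_simps)

lemma scale_B_sum: "scale_B t (sum F S) = (\<Sum>x\<in>S. scale_B t (F x))"
  by (rule poly_mapping_eqI) (simp add: lookup_scale_B lookup_sum sum_distrib_left)

lemma scale_B_cK_mult: "scale_B t (cK z * f) = cK z * scale_B t f"
  by (rule poly_mapping_eqI) (simp add: lookup_scale_B lookup_cK_mult mult.left_commute)

lemma scale_B_single: "scale_B t (Poly_Mapping.single m a) = Poly_Mapping.single m (t ^ B_degree m * a)"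
  by (rule poly_mapping_eqI) (simp add: lookup_scale_B lookup_single when_def)

lemma scale_B_X: "scale_B t (X m) = cK (t ^ B_degree m) * X m"
  by (simp add: X_def scale_B_single cK_mult_single)

lemma scale_B_cK: "scale_B t (cK z) = cK z"
  by (simp add: cK_def scale_B_single zero_prod_def)

lemma scale_B_mult: "scale_B t (f * g) = scale_B t f * scale_B t g"
proof -
  have "scale_B t f * scale_B t g =
        (\<Sum>m1\<in>Poly_Mapping.keys f. Poly_Mapping.single m1 (Poly_Mapping.lookup (scale_B t f) m1))
      * (\<Sum>m2\<in>Poly_Mapping.keys g. Poly_Mapping.single m2 (Poly_Mapping.lookup (scale_B t g) m2))"
    using poly_mapping_eq_sum_single[OF finite_keys keys_scale_B_subset] by metis
  then show ?thesis
    by (simp add: mult_eq_sum_single[of f g] scale_B_sum scale_B_single lookup_scale_B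
        sum_distrib_left sum_distrib_right mult_single sum.swap[of _ "Poly_Mapping.keys g"]
        B_degree_add power_add ac_simps)
qed

lemma bij_scale_B:
  assumes "t \<noteq> 0"
  shows "bij (scale_B t)"
proof (rule o_bij)
  have inverse: "scale_B s (scale_B (1 / s) f) = f" if "s \<noteq> 0" for s f
    using that by (intro poly_mapping_eqI) (simp add: lookup_scale_B power_divide)
  show "scale_B (1 / t) \<circ> scale_B t = id"
    using inverse[of "1 / t"] assms by (simp add: fun_eq_iff)
  show "scale_B t \<circ> scale_B (1 / t) = id"
    using inverse[of t] assms by (simp add: fun_eq_iff)
qed

lemma scale_B_Kcomp: "f \<in> Kcomp k p \<Longrightarrow> scale_B t f \<in> Kcomp k p"
  using keys_scale_B_subset[of t f] by (auto simp: Kcomp_def)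

lemma scale_B_delta_X: "scale_B t (delta \<beta> (X m)) = cK (t ^ B_degree m) * delta (t * \<beta>) (X m)"
  by (cases m) (simp add: delta_X scale_B_add scale_B_single cK_mult_single distrib_left ac_simps)

lemma scale_B_delta:
  assumes "t \<noteq> 0"
  shows "scale_B t (delta \<beta> f) = delta (t * \<beta>) (scale_B t f)"
  unfolding delta_eq_sum[of \<beta> f] delta_eq_sum[of "t * \<beta>" "scale_B t f"] keys_scale_B[OF assms]
  by (simp add: scale_B_sum scale_B_cK_mult scale_B_delta_X lookup_scale_B cK_mult ac_simps)

lemma scale_B_delta_iterate:
  assumes "t \<noteq> 0"
  shows "scale_B t ((delta \<beta> ^^ i) f) = (delta (t * \<beta>) ^^ i) (scale_B t f)"
  by (induction i) (simp_all add: scale_B_delta[OF assms])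

lemma scale_B_bracket_mon:
  assumes "t \<noteq> 0"
  shows "scale_B t (bracket_mon \<beta> c n m1 m2) =
           cK (t ^ B_degree m1 * t ^ B_degree m2) * bracket_mon (t * \<beta>) c n m1 m2"
  unfolding bracket_mon_def scale_B_sum scale_B_mult scale_B_cK scale_B_delta_iterate[OF assms]
    scale_B_X delta_iterate_cK_mult
  by (simp add: sum_distrib_left cK_mult ac_simps)

lemma scale_B_bracket:
  assumes "t \<noteq> 0"
  shows "scale_B t (bracket \<beta> c n f g) = bracket (t * \<beta>) c n (scale_B t f) (scale_B t g)"
  unfolding bracket_eq_sum_keys_subset[OF finite_keys keys_scale_B_subset[of t f]
      finite_keys keys_scale_B_subset[of t g]]
  by (simp add: bracket_def scale_B_sum scale_B_mult scale_B_cK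
      scale_B_bracket_mon[OF assms] lookup_scale_B cK_mult ac_simps)

lemma modular_isomorphic_scale_B:
  assumes "t \<noteq> 0"
  shows "modular_isomorphic (bracket \<beta> c) (bracket (t * \<beta>) c)"
  unfolding modular_isomorphic_def
  using assms bij_scale_B scale_B_add scale_B_cK_mult scale_B_Kcomp scale_B_bracket by blast

section \<open>Explicit brackets\<close>

lemma delta_iterate_2: "(delta \<beta> ^^ 2) f = delta \<beta> (delta \<beta> f)"
  by (simp add: numeral_2_eq_2)

lemma bracket_mon_2:
  "bracket_mon \<beta> c 2 m1 m2 =
     cK ((of_int (wt m1) + c * of_int (idx m1) + 1) gchoose 2) * (X m1 * (delta \<beta> ^^ 2) (X m2))
   - cK ((of_int (wt m1) + c * of_int (idx m1) + 1) * (of_int (wt m2) + c * of_int (idx m2) + 1))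
       * (delta \<beta> (X m1) * delta \<beta> (X m2))
   + cK ((of_int (wt m2) + c * of_int (idx m2) + 1) gchoose 2) * ((delta \<beta> ^^ 2) (X m1) * X m2)"
  by (simp add: bracket_mon_def numeral_2_eq_2 cK_uminus ac_simps)

lemma bracket_mon_E4_E6:
  "bracket_mon \<beta> c 1 (1,0,0,0) (0,1,0,0) = cK 2 * X (0,1,0,0) ^ 2 - cK 2 * X (1,0,0,0) ^ 3"
  unfolding bracket_mon_1 delta_X
  by (simp add: X_def mult_single cK_mult_single distrib_left distrib_right eval_nat_numeral)
    (intro poly_mapping_eqI, simp add: lookup_add lookup_minus lookup_single when_def)

lemma bracket_mon_A_E4:
  "bracket_mon \<beta> c 1 (0,0,1,0) (1,0,0,0) =
     cK ((2 - c) / 3) * (X (0,0,1,0) * X (0,1,0,0)) + cK (4 * \<beta> * c) * (X (0,0,0,1) * X (1,0,0,0))"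
  unfolding bracket_mon_1 delta_X
  by (simp add: X_def mult_single cK_mult_single distrib_left distrib_right eval_nat_numeral)
    (intro poly_mapping_eqI, auto simp: lookup_add lookup_minus lookup_single when_def field_simps)

lemma bracket_mon_A_B:
  "bracket_mon \<beta> c 1 (0,0,1,0) (0,0,0,1) = cK (2 * \<beta> * c) * X (0,0,0,1) ^ 2"
  unfolding bracket_mon_1 delta_X
  by (simp add: X_def mult_single cK_mult_single distrib_left distrib_right eval_nat_numeral)
    (intro poly_mapping_eqI, simp add: lookup_add lookup_minus lookup_single when_def)

lemma bracket_mon_A_A_2:
  "bracket_mon \<beta> c 2 (0,0,1,0) (0,0,1,0) = cK (- 4 * (c - 1)^2 * \<beta>^2) * X (0,0,0,1) ^ 2"
proof -
  have "delta \<beta> (X (0,0,1,0)) = cK (- 2 * \<beta>) * X (0,0,0,1)"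
    by (simp add: delta_X cK_mult_X mult.commute)
  moreover have "delta \<beta> (X (0,0,0,1)) = 0"
    by (simp add: delta_X)
  ultimately show ?thesis
    unfolding bracket_mon_2 delta_iterate_2
    by (simp add: delta_cK_mult)
      (simp add: cK_def X_def mult_single power2_eq_square algebra_simps flip: single_uminus)
qed

lemma lookup_bracket_K40_K60:
  fixes \<alpha> \<gamma> x y z :: complex
  defines "f \<equiv> Poly_Mapping.single (1,0,0,0) \<alpha> + Poly_Mapping.single (0,0,-2,2) \<gamma>"
    and "g \<equiv> Poly_Mapping.single (0,1,0,0) x + Poly_Mapping.single (1,0,-1,1) y
              + Poly_Mapping.single (0,0,-3,3) z"
  shows "Poly_Mapping.lookup (bracket \<beta> c 1 f g) (3,0,0,0) = - 2 * \<alpha> * x"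
    and "Poly_Mapping.lookup (bracket \<beta> c 1 f g) (0,2,0,0) = 2 * \<alpha> * x"
  unfolding f_def g_def bracket_add_left bracket_add_right bracket_single bracket_mon_1 delta_X
  by (simp_all add: lookup_add lookup_minus lookup_cK_mult X_def mult_single
      distrib_left distrib_right lookup_single when_def)

lemma lookup_bracket_A_K40:
  "Poly_Mapping.lookup (bracket \<beta> c 1 (Poly_Mapping.single (0,0,1,0) l)
      (Poly_Mapping.single (1,0,0,0) \<alpha> + Poly_Mapping.single (0,0,-2,2) \<gamma>)) (0,1,1,0)
   = (2 - c) / 3 * l * \<alpha>"
  unfolding bracket_add_right bracket_single bracket_mon_1 delta_X
  by (simp add: lookup_add lookup_minus lookup_cK_mult X_def mult_single
      distrib_left distrib_right lookup_single when_def field_simps)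

section \<open>Invariants of a modular isomorphism\<close>

text \<open>In exponent vectors, \<open>(0,0,1,0)\<close> is \<open>A\<close>, \<open>(0,0,0,1)\<close> is \<open>B\<close>, \<open>(0,0,-1,1)\<close> is \<open>F2\<close>,
  \<open>(1,0,0,0)\<close> is \<open>E4\<close> and \<open>(0,1,0,0)\<close> is \<open>E6\<close>.\<close>

lemma monomials_A: "{m. wt m = -2 \<and> idx m = 1} \<subseteq> {(0,0,1,0)}"
  by (auto; presburger)

lemma monomials_B: "{m. wt m = 0 \<and> idx m = 1} \<subseteq> {(0,0,0,1)}"
  by (auto; presburger)

lemma monomials_F2: "{m. wt m = 2 \<and> idx m = 0} \<subseteq> {(0,0,-1,1)}"
  by (auto; presburger)

lemma monomials_E4: "{m. wt m = 4 \<and> idx m = 0} \<subseteq> {(1,0,0,0), (0,0,-2,2)}"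
  by (auto; presburger)

lemma monomials_E6: "{m. wt m = 6 \<and> idx m = 0} \<subseteq> {(0,1,0,0), (1,0,-1,1), (0,0,-3,3)}"
  by (auto; presburger)

locale bracket_isomorphism =
  fixes \<beta> c \<beta>' c' :: complex and \<phi> :: "K \<Rightarrow> K"
  assumes inj: "inj \<phi>"
    and additive: "\<phi> (f + g) = \<phi> f + \<phi> g"
    and scalar: "\<phi> (cK z * f) = cK z * \<phi> f"
    and graded: "f \<in> Kcomp k p \<Longrightarrow> \<phi> f \<in> Kcomp k p"
    and intertwines: "\<phi> (bracket \<beta> c n f g) = bracket \<beta>' c' n (\<phi> f) (\<phi> g)"
begin

lemma zero: "\<phi> 0 = 0"
  using additive[of 0 0] by simp

lemma mult: "\<phi> (f * g) = \<phi> f * \<phi> g"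
  using intertwines[of 0] by (simp add: bracket_0)

lemma X_nonzero: "\<phi> (X m) \<noteq> 0"
  using inj zero by (metis injD lookup_X lookup_zero one_neq_zero)

lemma X_eq_sum:
  assumes "{m'. wt m' = wt m \<and> idx m' = idx m} \<subseteq> S" "finite S"
  shows "\<phi> (X m) = (\<Sum>m'\<in>S. Poly_Mapping.single m' (Poly_Mapping.lookup (\<phi> (X m)) m'))"
proof (rule poly_mapping_eq_sum_single[OF \<open>finite S\<close>])
  have "\<phi> (X m) \<in> Kcomp (wt m) (idx m)"
    by (rule graded) (simp add: Kcomp_def)
  then show "Poly_Mapping.keys (\<phi> (X m)) \<subseteq> S"
    using assms(1) by (auto simp: Kcomp_def)
qed

lemma X_eq_single:
  assumes "{m'. wt m' = wt m \<and> idx m' = idx m} \<subseteq> {m}"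
  obtains l where "l \<noteq> 0" "\<phi> (X m) = Poly_Mapping.single m l"
proof -
  have "\<phi> (X m) = Poly_Mapping.single m (Poly_Mapping.lookup (\<phi> (X m)) m)"
    using X_eq_sum[OF assms] by simp
  moreover from this have "Poly_Mapping.lookup (\<phi> (X m)) m \<noteq> 0"
    using X_nonzero[of m] by (metis single_zero)
  ultimately show thesis
    using that by blast
qed

lemma image_E4:
  obtains \<alpha> \<gamma> where "\<alpha> \<noteq> 0"
    "\<phi> (X (1,0,0,0)) = Poly_Mapping.single (1,0,0,0) \<alpha> + Poly_Mapping.single (0,0,-2,2) \<gamma>"
proof -
  define \<alpha> \<gamma> where "\<alpha> = Poly_Mapping.lookup (\<phi> (X (1,0,0,0))) (1,0,0,0)"
    and "\<gamma> = Poly_Mapping.lookup (\<phi> (X (1,0,0,0))) (0,0,-2,2)"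
  have E4: "\<phi> (X (1,0,0,0)) = Poly_Mapping.single (1,0,0,0) \<alpha> + Poly_Mapping.single (0,0,-2,2) \<gamma>"
    using X_eq_sum[of "(1,0,0,0)" "{(1,0,0,0), (0,0,-2,2)}"] monomials_E4
    by (simp add: \<alpha>_def \<gamma>_def)
  obtain \<mu> where "\<mu> \<noteq> 0" and F2: "\<phi> (X (0,0,-1,1)) = Poly_Mapping.single (0,0,-1,1) \<mu>"
    using X_eq_single[of "(0,0,-1,1)"] monomials_F2 by auto
  have "\<alpha> \<noteq> 0"
  proof
    assume "\<alpha> = 0"
    have "\<phi> (cK (\<gamma> / \<mu>^2) * (X (0,0,-1,1) * X (0,0,-1,1)))
          = cK (\<gamma> / \<mu>^2) * (\<phi> (X (0,0,-1,1)) * \<phi> (X (0,0,-1,1)))"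
      using scalar mult by metis
    also have "\<dots> = \<phi> (X (1,0,0,0))"
      unfolding E4 F2 using \<open>\<alpha> = 0\<close> \<open>\<mu> \<noteq> 0\<close>
      by (simp add: cK_mult_single mult_single power2_eq_square eval_nat_numeral)
    finally have "\<phi> (X (1,0,0,0)) = \<phi> (cK (\<gamma> / \<mu>^2) * (X (0,0,-1,1) * X (0,0,-1,1)))" ..
    then have "X (1,0,0,0) = cK (\<gamma> / \<mu>^2) * (X (0,0,-1,1) * X (0,0,-1,1))"
      using inj by (simp add: inj_eq)
    then have "Poly_Mapping.lookup (X (1,0,0,0)) (1,0,0,0)
        = Poly_Mapping.lookup (cK (\<gamma> / \<mu>^2) * (X (0,0,-1,1) * X (0,0,-1,1))) (1,0,0,0)"
      by simp
    then show False
      by (simp add: X_def mult_single cK_mult_single lookup_single)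
  qed
  then show thesis
    using that E4 by blast
qed

lemma diff: "\<phi> (f - g) = \<phi> f - \<phi> g"
  using additive[of "f - g" g] by simp

lemma power: "n \<noteq> 0 \<Longrightarrow> \<phi> (f ^ n) = \<phi> f ^ n"
proof (induction n)
  case (Suc n)
  then show ?case
    by (cases "n = 0") (simp_all add: mult)
qed simp

lemma image_E6:
  obtains x y z where "\<phi> (X (0,1,0,0)) =
    Poly_Mapping.single (0,1,0,0) x + Poly_Mapping.single (1,0,-1,1) y + Poly_Mapping.single (0,0,-3,3) z"
  using X_eq_sum[of "(0,1,0,0)" "{(0,1,0,0), (1,0,-1,1), (0,0,-3,3)}"] monomials_E6 that
  by (simp add: add.assoc)

lemma E6_leading_coeff:
  assumes E4: "\<phi> (X (1,0,0,0)) = Poly_Mapping.single (1,0,0,0) \<alpha> + Poly_Mapping.single (0,0,-2,2) \<gamma>"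
    and "\<alpha> \<noteq> 0"
    and E6: "\<phi> (X (0,1,0,0)) =
      Poly_Mapping.single (0,1,0,0) x + Poly_Mapping.single (1,0,-1,1) y + Poly_Mapping.single (0,0,-3,3) z"
  shows "x = \<alpha>"
proof -
  have "bracket \<beta>' c' 1 (\<phi> (X (1,0,0,0))) (\<phi> (X (0,1,0,0)))
        = cK 2 * \<phi> (X (0,1,0,0)) ^ 2 - cK 2 * \<phi> (X (1,0,0,0)) ^ 3"
    unfolding intertwines[symmetric] bracket_X bracket_mon_E4_E6 by (simp add: diff scalar power)
  then have "Poly_Mapping.lookup (bracket \<beta>' c' 1 (\<phi> (X (1,0,0,0))) (\<phi> (X (0,1,0,0)))) k
        = Poly_Mapping.lookup (cK 2 * \<phi> (X (0,1,0,0)) ^ 2 - cK 2 * \<phi> (X (1,0,0,0)) ^ 3) k" for k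
    by simp
  from this[of "(3,0,0,0)"] this[of "(0,2,0,0)"]
  have "- 2 * \<alpha> * x = - 2 * \<alpha> ^ 3" and "2 * \<alpha> * x = 2 * x ^ 2"
    unfolding E4 E6 lookup_bracket_K40_K60
    by (simp_all add: power2_eq_square power3_eq_cube distrib_left distrib_right mult_single
        cK_mult_single lookup_add lookup_minus lookup_single when_def)
  then show "x = \<alpha>"
    using \<open>\<alpha> \<noteq> 0\<close> by (auto simp: power2_eq_square power3_eq_cube)
qed

lemma c_eq: "c' = c"
proof -
  obtain l where "l \<noteq> 0" and A: "\<phi> (X (0,0,1,0)) = Poly_Mapping.single (0,0,1,0) l"
    using X_eq_single[of "(0,0,1,0)"] monomials_A by auto
  obtain \<nu> where B: "\<phi> (X (0,0,0,1)) = Poly_Mapping.single (0,0,0,1) \<nu>"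
    using X_eq_single[of "(0,0,0,1)"] monomials_B by auto
  obtain \<alpha> \<gamma> where "\<alpha> \<noteq> 0" and
    E4: "\<phi> (X (1,0,0,0)) = Poly_Mapping.single (1,0,0,0) \<alpha> + Poly_Mapping.single (0,0,-2,2) \<gamma>"
    by (rule image_E4)
  obtain x y z where E6: "\<phi> (X (0,1,0,0)) =
      Poly_Mapping.single (0,1,0,0) x + Poly_Mapping.single (1,0,-1,1) y + Poly_Mapping.single (0,0,-3,3) z"
    by (rule image_E6)
  have "x = \<alpha>"
    using E4 \<open>\<alpha> \<noteq> 0\<close> E6 by (rule E6_leading_coeff)
  have "bracket \<beta>' c' 1 (\<phi> (X (0,0,1,0))) (\<phi> (X (1,0,0,0)))
        = cK ((2 - c) / 3) * (\<phi> (X (0,0,1,0)) * \<phi> (X (0,1,0,0)))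
        + cK (4 * \<beta> * c) * (\<phi> (X (0,0,0,1)) * \<phi> (X (1,0,0,0)))"
    unfolding intertwines[symmetric] bracket_X bracket_mon_A_E4
    by (simp only: additive scalar) (simp only: mult)
  then have "Poly_Mapping.lookup (bracket \<beta>' c' 1 (\<phi> (X (0,0,1,0))) (\<phi> (X (1,0,0,0)))) (0,1,1,0)
        = Poly_Mapping.lookup (cK ((2 - c) / 3) * (\<phi> (X (0,0,1,0)) * \<phi> (X (0,1,0,0)))
        + cK (4 * \<beta> * c) * (\<phi> (X (0,0,0,1)) * \<phi> (X (1,0,0,0)))) (0,1,1,0)"
    by simp
  then have "(2 - c') / 3 * l * \<alpha> = (2 - c) / 3 * l * x"
    unfolding A B E4 E6 lookup_bracket_A_K40
    by (simp add: distrib_left distrib_right mult_single cK_mult_single lookup_add lookup_single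
        when_def)
  then show "c' = c"
    using \<open>x = \<alpha>\<close> \<open>\<alpha> \<noteq> 0\<close> \<open>l \<noteq> 0\<close> by (simp add: field_simps)
qed

lemma beta_eq_0_iff: "\<beta>' = 0 \<longleftrightarrow> \<beta> = 0"
proof -
  obtain l where "l \<noteq> 0" and A: "\<phi> (X (0,0,1,0)) = Poly_Mapping.single (0,0,1,0) l"
    using X_eq_single[of "(0,0,1,0)"] monomials_A by auto
  obtain \<nu> where "\<nu> \<noteq> 0" and B: "\<phi> (X (0,0,0,1)) = Poly_Mapping.single (0,0,0,1) \<nu>"
    using X_eq_single[of "(0,0,0,1)"] monomials_B by auto
  show ?thesis
  proof (cases "c = 1")
    case True
    have "bracket \<beta>' c' 1 (\<phi> (X (0,0,1,0))) (\<phi> (X (0,0,0,1)))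
          = cK (2 * \<beta> * c) * \<phi> (X (0,0,0,1)) ^ 2"
      unfolding intertwines[symmetric] bracket_X bracket_mon_A_B by (simp add: scalar power)
    then have "Poly_Mapping.single ((0,0,0,2) :: mon) (l * \<nu> * (2 * \<beta>' * c'))
        = Poly_Mapping.single (0,0,0,2) (2 * \<beta> * c * \<nu> ^ 2)"
      unfolding A B bracket_single bracket_mon_A_B
      by (simp add: power2_eq_square X_def mult_single cK_mult_single eval_nat_numeral)
    then have "l * \<nu> * (2 * \<beta>' * c') = 2 * \<beta> * c * \<nu> ^ 2"
      by (metis lookup_single_eq)
    then show ?thesis
      using True c_eq \<open>l \<noteq> 0\<close> \<open>\<nu> \<noteq> 0\<close> by (auto simp: power2_eq_square)
  next
    case False
    have "bracket \<beta>' c' 2 (\<phi> (X (0,0,1,0))) (\<phi> (X (0,0,1,0)))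
          = cK (- 4 * (c - 1)^2 * \<beta>^2) * \<phi> (X (0,0,0,1)) ^ 2"
      unfolding intertwines[symmetric] bracket_X bracket_mon_A_A_2 by (simp add: scalar power)
    then have "Poly_Mapping.single ((0,0,0,2) :: mon) (l * l * (- 4 * (c' - 1)^2 * \<beta>'^2))
        = Poly_Mapping.single (0,0,0,2) (- 4 * (c - 1)^2 * \<beta>^2 * \<nu> ^ 2)"
      unfolding A B bracket_single bracket_mon_A_A_2
      by (simp add: power2_eq_square X_def mult_single cK_mult_single eval_nat_numeral)
    then have "l * l * (- 4 * (c' - 1)^2 * \<beta>'^2) = - 4 * (c - 1)^2 * \<beta>^2 * \<nu> ^ 2"
      by (metis lookup_single_eq)
    then show ?thesis
      using False c_eq \<open>l \<noteq> 0\<close> \<open>\<nu> \<noteq> 0\<close> by auto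
  qed
qed

end

theorem mainTheorem11:
  fixes \<beta> c \<beta>' c' :: complex
  shows "modular_isomorphic (bracket \<beta> c) (bracket \<beta>' c') \<longleftrightarrow>
           c = c' \<and> ((\<beta> = 0 \<and> \<beta>' = 0) \<or> (\<beta> \<noteq> 0 \<and> \<beta>' \<noteq> 0))"
proof
  assume "modular_isomorphic (bracket \<beta> c) (bracket \<beta>' c')"
  then obtain \<phi> where iso: "bij \<phi>" "\<forall>f g. \<phi> (f + g) = \<phi> f + \<phi> g"
    "\<forall>z f. \<phi> (cK z * f) = cK z * \<phi> f" "\<forall>k p. \<forall>f\<in>Kcomp k p. \<phi> f \<in> Kcomp k p"
    "\<forall>n f g. \<phi> (bracket \<beta> c n f g) = bracket \<beta>' c' n (\<phi> f) (\<phi> g)"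
    unfolding modular_isomorphic_def by blast
  interpret bracket_isomorphism \<beta> c \<beta>' c' \<phi>
    using iso by unfold_locales (auto simp: bij_is_inj)
  show "c = c' \<and> ((\<beta> = 0 \<and> \<beta>' = 0) \<or> (\<beta> \<noteq> 0 \<and> \<beta>' \<noteq> 0))"
    using c_eq beta_eq_0_iff by auto
next
  assume params: "c = c' \<and> ((\<beta> = 0 \<and> \<beta>' = 0) \<or> (\<beta> \<noteq> 0 \<and> \<beta>' \<noteq> 0))"
  obtain t where "t \<noteq> 0" "\<beta>' = t * \<beta>"
  proof (cases "\<beta> = 0")
    case True
    then show thesis
      using params that[of 1] by simp
  next
    case False
    then show thesis
      using params that[of "\<beta>' / \<beta>"] by simp
  qed
  then show "modular_isomorphic (bracket \<beta> c) (bracket \<beta>' c')"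
    using params modular_isomorphic_scale_B by simp
qed

end
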